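(* For positive integers $N$ and $M\le N$, for $n\in\{1,\dots,M-1\}$ and $l\in\{1,\dots,M-1-n\}$ let $$c_M(n,l;t)=\prod_{j=1}^n\left|\frac{(1-t^{M-l-j})(1-t^{l+j})}{1-t^j}\right|.$$ For each $M$ let $(n_M,l_M)$ be a pair in this range at which $c_M(n,l;e^{\frac{2\pi i}{N+1/2}})$ attains its maximum. Assume $\frac{M}{N+\frac12}\to s\in[0,1]$, $\frac{n_M}{N+\frac12}\to n_s$ and $\frac{l_M}{N+\frac12}\to l_s$ as $N\to\infty$. Then $$\lim_{N\to\infty}\frac{1}{N+\frac12}\log c_M\big(n_M,l_M;e^{\frac{2\pi i}{N+1/2}}\big)\le\frac{\mathrm{Vol}(\mathbb{S}^3\setminus WL)}{2\pi},$$ with equality if and only if $s=1$, $n_s=\tfrac12$ and $l_s=\tfrac14$.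
   Context: $WL$ denotes the Whitehead link; $\mathrm{Vol}(\mathbb{S}^3\setminus WL)=v_8=8\Lambda(\pi/4)$ is its hyperbolic volume, where $\Lambda(\theta)=-\int_0^\theta\log|2\sin t|\,dt$ is the Lobachevsky function and $v_8$ is the volume of the regular ideal octahedron. *)

theory Defs
  imports "HOL-Analysis.Analysis"
begin

definition lobachevsky :: "real \<Rightarrow> real" where
  "lobachevsky \<theta> = - integral {0..\<theta>} (\<lambda>t. ln \<bar>2 * sin t\<bar>)"

text \<open>Hyperbolic volume of the Whitehead link complement: v8 = 8 Lambda(pi/4).\<close>
definition vol_WL :: real where
  "vol_WL = 8 * lobachevsky (pi / 4)"

definition cM :: "nat \<Rightarrow> nat \<Rightarrow> nat \<Rightarrow> complex \<Rightarrow> real" where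
  "cM M n l t = (\<Prod>j=1..n. norm ((1 - t ^ (M - l - j)) * (1 - t ^ (l + j)) / (1 - t ^ j)))"

definition qN :: "nat \<Rightarrow> complex" where
  "qN N = exp (2 * of_real pi * \<i> / of_real (real N + 1/2))"

definition admissible :: "nat \<Rightarrow> nat \<Rightarrow> nat \<Rightarrow> bool" where
  "admissible M n l \<longleftrightarrow> 1 \<le> n \<and> n \<le> M - 1 \<and> 1 \<le> l \<and> l + n + 1 \<le> M"

end

theory Submission
  imports Defs "HOL-Real_Asymp.Real_Asymp"
begin

text \<open>
  Write \<open>h = 1/(N + 1/2)\<close>, \<open>g(x) = ln |2 sin (pi x)|\<close> (\<open>logsin\<close>) and
  \<open>G(x) = integral of g over [0, x]\<close> (\<open>logsin_int\<close>). Since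
  \<open>|1 - exp (2 pi i k h)| = |2 sin (pi k h)|\<close>, the number \<open>h ln c_M(n, l)\<close> is a signed
  combination of five Riemann sums of \<open>g\<close> with mesh \<open>h\<close>. The function \<open>g\<close> has only
  logarithmic singularities and is unimodal on \<open>(0, 1)\<close>, so each of these sums is within
  \<open>O(h ln N)\<close> of the corresponding integral, and \<open>h ln c_M\<close> tends to
  \<open>F(u, n, l) = G(u + n) - G(u) + G(l + n) - G(l) - G(n)\<close> with \<open>u = s - l_s - n_s\<close>.

  For fixed \<open>n\<close> both windows \<open>G(x + n) - G(x)\<close> are largest when centred at \<open>1/2\<close>,
  and the resulting profile \<open>2 (G((1 + n)/2) - G((1 - n)/2)) - G(n)\<close> has derivative
  \<open>ln cot (pi n / 2)\<close>, so \<open>F\<close> is maximal exactly at \<open>u = l = 1/4\<close>, \<open>n = 1/2\<close>.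
  The duplication formula for sine gives \<open>G(1) = G(1/2) = 0\<close>, so the maximum is
  \<open>-4 G(1/4) = 8 Lambda(pi/4) / (2 pi)\<close>.
\<close>

section \<open>The function \<open>ln |2 sin (pi x)|\<close>\<close>

definition logsin :: "real \<Rightarrow> real" where
  "logsin x = ln \<bar>2 * sin (pi * x)\<bar>"

lemma sin_ge_third:
  assumes "0 \<le> y" "y \<le> pi/2"
  shows "y/3 \<le> sin y"
proof (cases "y \<le> 1")
  case True
  have "\<bar>sin y - (\<Sum>m<3. sin_coeff m * y ^ m)\<bar> \<le> inverse (fact 3) * \<bar>y\<bar> ^ 3"
    by (rule Maclaurin_sin_bound)
  moreover have "(\<Sum>m<3. sin_coeff m * y ^ m) = y"
    by (simp add: numeral_3_eq_3 sin_coeff_def)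
  moreover have "y ^ 3 \<le> y"
  proof -
    have "y * y \<le> 1"
      using True assms by (simp add: mult_le_one)
    then show ?thesis
      using assms mult_right_mono[of "y * y" 1 y] by (simp add: power3_eq_cube)
  qed
  ultimately show ?thesis
    using assms by (auto simp: fact_numeral abs_if split: if_splits)
next
  case False
  have "sin 1 \<le> sin y"
    using False assms by (intro sin_monotone_2pi_le) auto
  moreover have "\<bar>sin 1 - (\<Sum>m<3. sin_coeff m * (1::real) ^ m)\<bar> \<le> inverse (fact 3) * \<bar>1\<bar> ^ 3"
    by (rule Maclaurin_sin_bound)
  moreover have "(\<Sum>m<3. sin_coeff m * (1::real) ^ m) = 1"
    by (simp add: numeral_3_eq_3 sin_coeff_def)
  moreover have "y/3 \<le> 2/3"
    using assms pi_half_less_two by simp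
  ultimately show ?thesis
    by (auto simp: fact_numeral)
qed

lemma sin_pi_one_minus: "sin (pi * (1 - x)) = sin (pi * x)"
  by (simp add: right_diff_distrib)

lemma sin_pi_pos: "0 < x \<Longrightarrow> x < 1 \<Longrightarrow> 0 < sin (pi * x)"
  by (intro sin_gt_zero) auto

lemma mult_one_minus_le_two_sin_pi:
  assumes "0 < x" "x < 1"
  shows "x * (1 - x) \<le> 2 * sin (pi * x)"
proof -
  have half: "t * (1 - t) \<le> 2 * sin (pi * t)" if "0 < t" "t \<le> 1/2" for t
  proof -
    have "t * (1 - t) \<le> t"
      using that by (simp add: mult_le_cancel_left1)
    also have "\<dots> \<le> 2 * (pi * t / 3)"
      using that pi_gt3 by simp
    also have "\<dots> \<le> 2 * sin (pi * t)"
      using that sin_ge_third[of "pi * t"] by simp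
    finally show ?thesis .
  qed
  show ?thesis
  proof (cases "x \<le> 1/2")
    case True
    then show ?thesis using half assms by blast
  next
    case False
    then show ?thesis
      using half[of "1 - x"] assms by (simp add: sin_pi_one_minus mult.commute)
  qed
qed

lemma logsin_eq: "0 < x \<Longrightarrow> x < 1 \<Longrightarrow> logsin x = ln (2 * sin (pi * x))"
  using sin_pi_pos[of x] by (simp add: logsin_def)

lemma logsin_one_minus: "logsin (1 - x) = logsin x"
  by (simp add: logsin_def sin_pi_one_minus)

lemma logsin_le_ln2: "logsin x \<le> ln 2"
proof (cases "sin (pi * x) = 0")
  case False
  have "\<bar>2 * sin (pi * x)\<bar> \<le> 2"
    using abs_sin_le_one[of "pi * x"] by (simp add: abs_mult)
  then show ?thesis
    using False by (simp add: logsin_def)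
qed (simp add: logsin_def)

lemma ln_plus_ln_one_minus_le_logsin:
  assumes "0 < x" "x < 1"
  shows "ln x + ln (1 - x) \<le> logsin x"
proof -
  have "ln x + ln (1 - x) = ln (x * (1 - x))"
    using assms by (simp add: ln_mult)
  also have "\<dots> \<le> ln (2 * sin (pi * x))"
    using assms mult_one_minus_le_two_sin_pi[OF assms] sin_pi_pos[OF assms]
    by (subst ln_le_cancel_iff) auto
  finally show ?thesis
    using assms by (simp add: logsin_eq)
qed

lemma logsin_increasing:
  assumes "0 < x" "x \<le> y" "y \<le> 1/2"
  shows "logsin x \<le> logsin y"
proof -
  have "sin (pi * x) \<le> sin (pi * y)"
    using assms by (intro sin_monotone_2pi_le) (auto intro: order.trans[of _ 0])
  then show ?thesis
    using assms sin_pi_pos[of x] by (simp add: logsin_eq)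
qed

lemma logsin_decreasing:
  assumes "1/2 \<le> x" "x \<le> y" "y < 1"
  shows "logsin y \<le> logsin x"
  using logsin_increasing[of "1 - y" "1 - x"] assms by (simp add: logsin_one_minus)

lemma logsin_double:
  assumes "0 < x" "x < 1/2"
  shows "logsin (2 * x) = logsin x + logsin (x + 1/2)"
proof -
  have s: "0 < sin (pi * x)" and c: "0 < cos (pi * x)"
    using assms by (auto intro!: sin_pi_pos cos_gt_zero_pi intro: order.strict_trans[of _ 0])
  have "logsin (2 * x) = ln \<bar>2 * sin (2 * (pi * x))\<bar>"
    by (simp add: logsin_def mult_ac)
  also have "\<dots> = ln ((2 * sin (pi * x)) * (2 * cos (pi * x)))"
    using s c by (simp add: sin_double)
  also have "\<dots> = ln (2 * sin (pi * x)) + ln (2 * cos (pi * x))"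
    using s c by (subst ln_mult) auto
  also have "ln (2 * sin (pi * x)) = logsin x"
    using assms by (simp add: logsin_eq)
  also have "ln (2 * cos (pi * x)) = logsin (x + 1/2)"
    using c by (simp add: logsin_def distrib_left sin_add)
  finally show ?thesis .
qed

lemma continuous_on_logsin: "continuous_on {0<..<1} logsin"
proof -
  have "continuous_on {0<..<1} (\<lambda>x. ln (2 * sin (pi * x)))"
    using sin_pi_pos by (intro continuous_intros) force+
  then show ?thesis
    by (rule continuous_on_cong[THEN iffD1, rotated 2]) (auto simp: logsin_eq)
qed

lemma abs_logsin_le:
  assumes "0 < x" "x < 1"
  shows "\<bar>logsin x\<bar> \<le> ln 2 + 2 * x powr (-(1/2)) + 2 * (1 - x) powr (-(1/2))"
proof -
  have neg_ln_le: "- ln t \<le> 2 * t powr (-(1/2))" if "0 < t" for t :: real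
    using ln_le_minus_one[of "t powr (-(1/2))"] that by (simp add: ln_powr)
  show ?thesis
    using ln_plus_ln_one_minus_le_logsin[OF assms] logsin_le_ln2[of x]
      neg_ln_le[of x] neg_ln_le[of "1 - x"] assms
      powr_ge_zero[of x "-(1/2)"] powr_ge_zero[of "1 - x" "-(1/2)"] ln_ge_zero[of 2]
    unfolding abs_le_iff by linarith
qed

lemma logsin_integrable_01: "logsin integrable_on {0..1}"
proof -
  have i1: "(\<lambda>x::real. x powr (-(1/2))) integrable_on {0..1}"
    by (rule integrable_on_powr_from_0) auto
  have i2: "(\<lambda>x::real. (1 - x) powr (-(1/2))) integrable_on {0..1}"
    using integrable_affinity[of "\<lambda>x::real. x powr (-(1/2))" 0 1 "-1" 1] i1 by simp
  have "(\<lambda>x. ln 2 + 2 * x powr (-(1/2)) + 2 * (1 - x) powr (-(1/2))) integrable_on {0..1::real}"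
    using i1 i2 by (intro integrable_add integrable_mult_right) (simp_all add: integrable_const_ivl)
  then have "(\<lambda>x. ln 2 + 2 * x powr (-(1/2)) + 2 * (1 - x) powr (-(1/2))) integrable_on {0<..<1::real}"
    by (rule integrable_spike_set) (auto intro: negligible_subset[of "{0,1}"])
  then have "logsin integrable_on {0<..<1}"
    by (rule measurable_bounded_by_integrable_imp_integrable_real[rotated])
       (auto intro: continuous_imp_measurable_on_sets_lebesgue continuous_on_logsin abs_logsin_le)
  then show ?thesis
    by (rule integrable_spike_set) (auto intro: negligible_subset[of "{0,1}"])
qed

lemma logsin_integrable: "0 \<le> a \<Longrightarrow> b \<le> 1 \<Longrightarrow> logsin integrable_on {a..b}"
  by (rule integrable_on_subinterval[OF logsin_integrable_01]) auto

definition logsin_int :: "real \<Rightarrow> real" where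
  "logsin_int x = integral {0..x} logsin"

lemma logsin_int_0 [simp]: "logsin_int 0 = 0"
  by (simp add: logsin_int_def)

lemma continuous_on_logsin_int: "continuous_on {0..1} logsin_int"
  unfolding logsin_int_def by (rule indefinite_integral_continuous_1[OF logsin_integrable_01])

lemma tendsto_logsin_int:
  assumes "(f \<longlongrightarrow> x) sequentially" "eventually (\<lambda>N. f N \<in> {0..1}) sequentially"
  shows "((\<lambda>N. logsin_int (f N)) \<longlongrightarrow> logsin_int x) sequentially"
proof (rule continuous_on_tendsto_compose[OF continuous_on_logsin_int assms(1) _ assms(2)])
  show "x \<in> {0..1}"
    using Lim_in_closed_set[OF closed_atLeastAtMost assms(2) _ assms(1)] by simp
qed

lemma logsin_int_diff:
  assumes "0 \<le> a" "a \<le> b" "b \<le> 1"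
  shows "logsin_int b - logsin_int a = integral {a..b} logsin"
proof -
  have "integral {0..a} logsin + integral {a..b} logsin = integral {0..b} logsin"
    using assms by (intro Henstock_Kurzweil_Integration.integral_combine logsin_integrable) auto
  then show ?thesis
    by (simp add: logsin_int_def)
qed

lemma logsin_int_has_real_derivative:
  assumes "0 < y" "y < 1"
  shows "(logsin_int has_real_derivative logsin y) (at y)"
proof -
  have "continuous (at y within ({0..1} - {})) logsin"
    using continuous_on_logsin assms
    by (simp add: continuous_on_eq_continuous_at continuous_at_imp_continuous_at_within)
  then have "(logsin_int has_vector_derivative logsin y) (at y within ({0..1} - {}))"
    unfolding logsin_int_def[abs_def] using assms
    by (intro integral_has_vector_derivative_continuous_at[OF logsin_integrable_01]) auto
  moreover have "at y within {0..1} = at y"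
    using assms by (intro at_within_interior) auto
  ultimately show ?thesis
    by (simp add: has_real_derivative_iff_has_vector_derivative)
qed

lemma integral_logsin_reflect:
  "integral {1 - b..1 - a} logsin = integral {a..b} logsin"
proof -
  have "integral {1 - b..1 - a} logsin = integral {(1 - b) - 1..(1 - a) - 1} (\<lambda>x. logsin (1 - (x + 1)))"
    by (simp only: integral_shift_real_ivl logsin_one_minus)
  then show ?thesis
    by simp
qed

text \<open>Integrating the duplication formula \<open>g(2x) = g(x) + g(x + 1/2)\<close> over \<open>[0, 1/2]\<close>
  gives \<open>G(1)/2 = G(1)\<close>.\<close>

lemma logsin_int_1: "logsin_int 1 = 0"
proof -
  have "integral {0..1/2} (\<lambda>x. logsin (2 * x)) = (1/2) * integral {0..1} logsin"
    using integral_stretch_real[where m = 2 and f = logsin and a = 0 and b = 1] by simp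
  moreover have "integral {0..1/2} (\<lambda>x. logsin (2 * x))
      = integral {0..1/2} (\<lambda>x. logsin x + logsin (x + 1/2))"
    by (rule integral_spike[of "{0, 1/2}"]) (auto simp: logsin_double)
  moreover have "integral {0..1/2} (\<lambda>x. logsin x + logsin (x + 1/2))
      = integral {0..1/2} logsin + integral {1/2..1} logsin"
  proof -
    have "(\<lambda>x. logsin (x + 1/2)) integrable_on {1/2 - 1/2..1 - 1/2}"
      by (intro integrable_shift_real_ivl logsin_integrable) auto
    then show ?thesis
      using integral_shift_real_ivl[of "1/2" "1/2" 1 logsin]
      by (subst integral_add) (auto intro: logsin_integrable)
  qed
  ultimately show ?thesis
    using logsin_int_diff[of 0 "1/2"] logsin_int_diff[of "1/2" 1] by (simp add: logsin_int_def)
qed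

lemma logsin_int_half: "logsin_int (1/2) = 0"
  using integral_logsin_reflect[where a = 0 and b = "1/2"] logsin_int_diff[of "1/2" 1] logsin_int_1
  by (simp add: logsin_int_def)

lemma logsin_int_three_quarters: "logsin_int (3/4) = - logsin_int (1/4)"
  using integral_logsin_reflect[where a = "1/4" and b = "1/2"] logsin_int_diff[of "1/2" "3/4"]
    logsin_int_diff[of "1/4" "1/2"] logsin_int_half
  by simp

lemma vol_WL_eq: "vol_WL / (2 * pi) = - 4 * logsin_int (1/4)"
proof -
  have "integral {0..1/4} (\<lambda>x. ln \<bar>2 * sin (pi * x)\<bar>)
      = (1 / pi) * integral {0..pi/4} (\<lambda>t. ln \<bar>2 * sin t\<bar>)"
    using integral_stretch_real[where m = pi and f = "\<lambda>t. ln \<bar>2 * sin t\<bar>" and a = 0 and b = "pi/4"]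
    by simp
  then show ?thesis
    by (simp add: vol_WL_def lobachevsky_def logsin_int_def logsin_def[abs_def])
qed

section \<open>Maximising the limit functional\<close>

lemma deriv_pos_neg_imp_strict_max:
  fixes f f' :: "real \<Rightarrow> real"
  assumes cont: "continuous_on {a..b} f"
    and deriv: "\<And>y. a < y \<Longrightarrow> y < b \<Longrightarrow> (f has_real_derivative f' y) (at y)"
    and pos: "\<And>y. a < y \<Longrightarrow> y < c \<Longrightarrow> 0 < f' y"
    and neg: "\<And>y. c < y \<Longrightarrow> y < b \<Longrightarrow> f' y < 0"
    and "a \<le> x" "x \<le> b" "a \<le> c" "c \<le> b" "x \<noteq> c"
  shows "f x < f c"
proof (cases "x < c")
  case True
  show ?thesis
  proof (rule DERIV_pos_imp_increasing_open[OF True])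
    show "continuous_on {x..c} f"
      using assms by (auto intro: continuous_on_subset[OF cont])
    show "\<exists>d. DERIV f y :> d \<and> 0 < d" if "x < y" "y < c" for y
      using that assms by (intro exI[of _ "f' y"] conjI deriv pos) auto
  qed
next
  case False
  then have "c < x"
    using assms by simp
  then show ?thesis
  proof (rule DERIV_neg_imp_decreasing_open)
    show "continuous_on {c..x} f"
      using assms \<open>c < x\<close> by (auto intro: continuous_on_subset[OF cont])
    show "\<exists>d. DERIV f y :> d \<and> d < 0" if "c < y" "y < x" for y
      using that assms by (intro exI[of _ "f' y"] conjI deriv neg) auto
  qed
qed

definition logsin_window :: "real \<Rightarrow> real \<Rightarrow> real" where
  "logsin_window n x = logsin_int (x + n) - logsin_int x"

definition logsin_profile :: "real \<Rightarrow> real" where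
  "logsin_profile n = 2 * logsin_window n ((1 - n) / 2) - logsin_int n"

definition limit_functional :: "real \<Rightarrow> real \<Rightarrow> real \<Rightarrow> real" where
  "limit_functional u n l = logsin_window n u + logsin_window n l - logsin_int n"

lemma continuous_on_logsin_int_comp:
  assumes "continuous_on S f" "\<And>x. x \<in> S \<Longrightarrow> f x \<in> {0..1}"
  shows "continuous_on S (\<lambda>x. logsin_int (f x))"
  using assms by (intro continuous_on_compose2[OF continuous_on_logsin_int]) auto

lemma logsin_shift_less:
  assumes "0 < n" "0 < y" "y + n < 1"
  shows "y < (1 - n) / 2 \<Longrightarrow> logsin y < logsin (y + n)"
    and "(1 - n) / 2 < y \<Longrightarrow> logsin (y + n) < logsin y"
proof -
  have diff: "sin (pi * (y + n)) - sin (pi * y) = 2 * sin (pi * n / 2) * cos (pi * (y + n / 2))"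
    by (simp add: sin_diff_sin algebra_simps add_divide_distrib)
  have sin_half: "0 < sin (pi * n / 2)"
    using assms by (intro sin_gt_zero) auto
  have ln_eqs: "logsin y = ln (2 * sin (pi * y))" "logsin (y + n) = ln (2 * sin (pi * (y + n)))"
    and sin_pos: "0 < sin (pi * y)" "0 < sin (pi * (y + n))"
    using assms by (auto simp: logsin_eq sin_pi_pos)
  show "logsin y < logsin (y + n)" if "y < (1 - n) / 2"
  proof -
    have "pi * (y + n / 2) < pi * (1 / 2)"
      using that by (intro mult_strict_left_mono) auto
    then have "0 < cos (pi * (y + n / 2))"
      using assms by (intro cos_gt_zero_pi) (auto intro: order.strict_trans[of _ 0])
    then have "0 < 2 * sin (pi * n / 2) * cos (pi * (y + n / 2))"
      using sin_half by simp
    then have "sin (pi * y) < sin (pi * (y + n))"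
      using diff by linarith
    then show ?thesis
      using sin_pos by (simp add: ln_eqs)
  qed
  show "logsin (y + n) < logsin y" if "(1 - n) / 2 < y"
  proof -
    have "pi * (1 / 2) < pi * (y + n / 2)" "pi * (y + n / 2) \<le> pi * 1"
      using that assms by (intro mult_strict_left_mono mult_left_mono; simp)+
    then have "cos (pi * (y + n / 2)) < cos (pi / 2)"
      by (intro cos_monotone_0_pi) auto
    then have "2 * sin (pi * n / 2) * cos (pi * (y + n / 2)) < 0"
      using sin_half by (simp add: mult_pos_neg)
    then have "sin (pi * (y + n)) < sin (pi * y)"
      using diff by linarith
    then show ?thesis
      using sin_pos by (simp add: ln_eqs)
  qed
qed

lemma logsin_window_less_centred:
  assumes "0 < n" "n < 1" "0 \<le> x" "x \<le> 1 - n" "x \<noteq> (1 - n) / 2"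
  shows "logsin_window n x < logsin_window n ((1 - n) / 2)"
proof (rule deriv_pos_neg_imp_strict_max[where a = 0 and b = "1 - n" and c = "(1 - n) / 2"
      and f = "logsin_window n" and f' = "\<lambda>y. logsin (y + n) - logsin y"])
  show "continuous_on {0..1 - n} (logsin_window n)"
    unfolding logsin_window_def[abs_def] using assms
    by (intro continuous_intros continuous_on_logsin_int_comp) auto
  show "(logsin_window n has_real_derivative logsin (y + n) - logsin y) (at y)"
    if "0 < y" "y < 1 - n" for y
    unfolding logsin_window_def[abs_def] using that \<open>0 < n\<close>
    by (auto intro!: derivative_eq_intros
        DERIV_chain2[OF logsin_int_has_real_derivative] logsin_int_has_real_derivative)
  show "0 < logsin (y + n) - logsin y" if "0 < y" "y < (1 - n) / 2" for y
    using logsin_shift_less(1)[of n y] that \<open>0 < n\<close> by (simp add: field_simps)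
  show "logsin (y + n) - logsin y < 0" if "(1 - n) / 2 < y" "y < 1 - n" for y
    using logsin_shift_less(2)[of n y] that \<open>0 < n\<close> by (simp add: field_simps)
qed (use assms in auto)

lemma logsin_window_le_centred:
  assumes "0 \<le> n" "n \<le> 1" "0 \<le> x" "x \<le> 1 - n"
  shows "logsin_window n x \<le> logsin_window n ((1 - n) / 2)"
proof (cases "n = 0 \<or> n = 1")
  case True
  then show ?thesis
    using assms by (auto simp: logsin_window_def)
next
  case False
  then show ?thesis
    using assms logsin_window_less_centred[of n x] by fastforce
qed

lemma logsin_profile_eq:
  "logsin_profile n = 2 * (logsin_int ((1 + n) / 2) - logsin_int ((1 - n) / 2)) - logsin_int n"
proof -
  have "(1 - n) / 2 + n = (1 + n) / 2"
    by (simp add: field_simps)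
  then show ?thesis
    by (simp only: logsin_profile_def logsin_window_def)
qed

lemma logsin_profile_has_real_derivative:
  assumes "0 < n" "n < 1"
  shows "(logsin_profile has_real_derivative
           logsin ((1 + n) / 2) + logsin ((1 - n) / 2) - logsin n) (at n)"
proof -
  have plus: "((\<lambda>m. logsin_int ((1 + m) / 2)) has_real_derivative logsin ((1 + n) / 2) * (1 / 2)) (at n)"
    by (rule DERIV_chain2[OF logsin_int_has_real_derivative])
       (use assms in \<open>auto intro!: derivative_eq_intros\<close>)
  have minus: "((\<lambda>m. logsin_int ((1 - m) / 2)) has_real_derivative logsin ((1 - n) / 2) * (- 1 / 2)) (at n)"
    by (rule DERIV_chain2[OF logsin_int_has_real_derivative])
       (use assms in \<open>auto intro!: derivative_eq_intros\<close>)
  have at_n: "(logsin_int has_real_derivative logsin n) (at n)"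
    using assms by (intro logsin_int_has_real_derivative)
  show ?thesis
    unfolding logsin_profile_eq[abs_def] by (rule derivative_eq_intros plus minus at_n | simp)+
qed

lemma logsin_profile_deriv_eq:
  assumes "0 < n" "n < 1"
  shows "logsin ((1 + n) / 2) + logsin ((1 - n) / 2) - logsin n
           = ln (2 * cos (pi * n / 2)) - ln (2 * sin (pi * n / 2))"
proof -
  define z where "z = pi * n / 2"
  have z: "0 < z" "z < pi / 2"
    using assms by (auto simp: z_def)
  have c: "0 < cos z" and s: "0 < sin z"
    using z by (auto intro: cos_gt_zero_pi sin_gt_zero)
  have plus: "logsin ((1 + n) / 2) = ln (2 * cos z)" and minus: "logsin ((1 - n) / 2) = ln (2 * cos z)"
    using c by (simp_all add: logsin_def z_def add_divide_distrib diff_divide_distrib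
        distrib_left right_diff_distrib sin_add sin_diff)
  have "logsin n = ln \<bar>2 * sin (2 * z)\<bar>"
    by (simp add: logsin_def z_def)
  also have "\<dots> = ln ((2 * sin z) * (2 * cos z))"
    using s c by (simp add: sin_double)
  also have "\<dots> = ln (2 * sin z) + ln (2 * cos z)"
    using s c by (subst ln_mult) auto
  finally show ?thesis
    using plus minus by (simp add: z_def)
qed

lemma continuous_on_logsin_profile: "continuous_on {0..1} logsin_profile"
  unfolding logsin_profile_eq[abs_def]
  by (intro continuous_intros continuous_on_logsin_int_comp) auto

lemma logsin_profile_less_half:
  assumes "0 \<le> n" "n \<le> 1" "n \<noteq> 1/2"
  shows "logsin_profile n < logsin_profile (1/2)"
proof (rule deriv_pos_neg_imp_strict_max[where a = 0 and b = 1 and c = "1/2"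
      and f = logsin_profile and f' = "\<lambda>n. ln (2 * cos (pi * n / 2)) - ln (2 * sin (pi * n / 2))"])
  show "(logsin_profile has_real_derivative ln (2 * cos (pi * y / 2)) - ln (2 * sin (pi * y / 2)))
      (at y)"
    if "0 < y" "y < 1" for y
    using logsin_profile_has_real_derivative[OF that] logsin_profile_deriv_eq[OF that] by simp
  show "0 < ln (2 * cos (pi * y / 2)) - ln (2 * sin (pi * y / 2))" if "0 < y" "y < 1/2" for y
  proof -
    have y: "0 < pi * y" "pi * y < pi * (1/2)"
      using that by (auto intro: mult_strict_left_mono)
    have "cos (pi / 2 - pi * y / 2) < cos (pi * y / 2)"
      by (rule cos_monotone_0_pi) (use y pi_gt_zero in linarith)+
    moreover have "0 < sin (pi * y / 2)"
      using y by (intro sin_gt_zero) auto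
    ultimately show ?thesis
      by (simp add: cos_diff)
  qed
  show "ln (2 * cos (pi * y / 2)) - ln (2 * sin (pi * y / 2)) < 0" if "1/2 < y" "y < 1" for y
  proof -
    have y: "pi * (1/2) < pi * y" "pi * y < pi * 1"
      using that by (auto intro: mult_strict_left_mono)
    have "cos (pi * y / 2) < cos (pi / 2 - pi * y / 2)"
      by (rule cos_monotone_0_pi) (use y pi_gt_zero in linarith)+
    moreover have "0 < cos (pi * y / 2)"
      by (rule cos_gt_zero_pi) (use y pi_gt_zero in linarith)+
    ultimately show ?thesis
      by (simp add: cos_diff)
  qed
qed (use assms continuous_on_logsin_profile in auto)

lemma logsin_profile_half: "logsin_profile (1/2) = vol_WL / (2 * pi)"
  by (simp add: logsin_profile_eq vol_WL_eq logsin_int_three_quarters logsin_int_half)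

lemma limit_functional_le_profile:
  assumes "0 \<le> u" "0 \<le> n" "0 \<le> l" "u + n + l \<le> 1"
  shows "limit_functional u n l \<le> logsin_profile n"
  using logsin_window_le_centred[of n u] logsin_window_le_centred[of n l] assms
  by (simp add: limit_functional_def logsin_profile_def)

lemma logsin_profile_le_half:
  assumes "0 \<le> n" "n \<le> 1"
  shows "logsin_profile n \<le> logsin_profile (1/2)"
proof (cases "n = 1/2")
  case True
  then show ?thesis
    by (simp only: order_refl)
next
  case False
  then show ?thesis
    using logsin_profile_less_half[OF assms] by simp
qed

lemma limit_functional_le_vol:
  assumes "0 \<le> u" "0 \<le> n" "0 \<le> l" "u + n + l \<le> 1"
  shows "limit_functional u n l \<le> vol_WL / (2 * pi)"
  using limit_functional_le_profile[OF assms] logsin_profile_le_half[of n] assms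
  by (simp add: logsin_profile_half)

lemma limit_functional_eq_vol_iff:
  assumes "0 \<le> u" "0 \<le> n" "0 \<le> l" "u + n + l \<le> 1"
  shows "limit_functional u n l = vol_WL / (2 * pi) \<longleftrightarrow> u = 1/4 \<and> n = 1/2 \<and> l = 1/4"
proof
  assume eq: "limit_functional u n l = vol_WL / (2 * pi)"
  have n: "n = 1/2"
  proof (rule ccontr)
    assume "n \<noteq> 1/2"
    then show False
      using eq limit_functional_le_profile[OF assms] logsin_profile_less_half[of n] assms
      by (simp add: logsin_profile_half)
  qed
  have sum: "logsin_window (1/2) u + logsin_window (1/2) l = 2 * logsin_window (1/2) (1/4)"
    using eq n by (simp add: limit_functional_def logsin_profile_def flip: logsin_profile_half)
  have u: "u = 1/4"
  proof (rule ccontr)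
    assume "u \<noteq> 1/4"
    then have "logsin_window (1/2) u < logsin_window (1/2) (1/4)"
      using logsin_window_less_centred[of "1/2" u] assms n by simp
    then show False
      using sum logsin_window_le_centred[of "1/2" l] assms n by simp
  qed
  have l: "l = 1/4"
  proof (rule ccontr)
    assume "l \<noteq> 1/4"
    then have "logsin_window (1/2) l < logsin_window (1/2) (1/4)"
      using logsin_window_less_centred[of "1/2" l] assms n by simp
    then show False
      using sum logsin_window_le_centred[of "1/2" u] assms n by simp
  qed
  show "u = 1/4 \<and> n = 1/2 \<and> l = 1/4"
    using u n l by simp
next
  assume "u = 1/4 \<and> n = 1/2 \<and> l = 1/4"
  moreover have "limit_functional (1/4) (1/2) (1/4) = vol_WL / (2 * pi)"
    by (simp add: limit_functional_def logsin_profile_def flip: logsin_profile_half)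
  ultimately show "limit_functional u n l = vol_WL / (2 * pi)"
    by blast
qed

section \<open>Riemann sums of monotone functions\<close>

lemma integral_between_consts:
  fixes f :: "real \<Rightarrow> real"
  assumes "a \<le> b" "f integrable_on {a..b}"
    and "\<And>x. x \<in> {a..b} \<Longrightarrow> lo \<le> f x" "\<And>x. x \<in> {a..b} \<Longrightarrow> f x \<le> hi"
  shows "(b - a) * lo \<le> integral {a..b} f" "integral {a..b} f \<le> (b - a) * hi"
proof -
  have "integral {a..b} (\<lambda>x. lo) \<le> integral {a..b} f"
    using assms by (intro integral_le) auto
  then show "(b - a) * lo \<le> integral {a..b} f"
    using assms(1) by simp
  have "integral {a..b} f \<le> integral {a..b} (\<lambda>x. hi)"
    using assms by (intro integral_le) auto
  then show "integral {a..b} f \<le> (b - a) * hi"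
    using assms(1) by simp
qed

lemma right_riemann_sum_error_mono_on:
  fixes f :: "real \<Rightarrow> real"
  assumes "0 \<le> h" "mono_on {a..a + real m * h} f" "f integrable_on {a..a + real m * h}"
  shows "0 \<le> h * (\<Sum>k=1..m. f (a + real k * h)) - integral {a..a + real m * h} f
         \<and> h * (\<Sum>k=1..m. f (a + real k * h)) - integral {a..a + real m * h} f
             \<le> h * (f (a + real m * h) - f a)"
  using assms(2,3)
proof (induction m)
  case 0
  then show ?case by simp
next
  case (Suc m)
  define x where "x = a + real m * h"
  define y where "y = a + real (Suc m) * h"
  have xy: "a \<le> x" "x \<le> y" "y - x = h"
    using assms(1) by (simp_all add: x_def y_def algebra_simps)
  have sub: "{a..x} \<subseteq> {a..y}" "{x..y} \<subseteq> {a..y}"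
    using xy by auto
  have mono: "mono_on {a..y} f" and int: "f integrable_on {a..y}"
    using Suc.prems by (simp_all add: y_def)
  have IH: "0 \<le> h * (\<Sum>k=1..m. f (a + real k * h)) - integral {a..x} f"
    "h * (\<Sum>k=1..m. f (a + real k * h)) - integral {a..x} f \<le> h * f x - h * f a"
    using Suc.IH mono_on_subset[OF mono sub(1)] integrable_on_subinterval[OF int sub(1)]
    by (simp_all add: x_def right_diff_distrib)
  have split: "integral {a..y} f = integral {a..x} f + integral {x..y} f"
    using xy int by (intro Henstock_Kurzweil_Integration.integral_combine[symmetric]) auto
  have "h * f x \<le> integral {x..y} f" "integral {x..y} f \<le> h * f y"
    using integral_between_consts[of x y f "f x" "f y"] xy
      integrable_on_subinterval[OF int sub(2)] mono_onD[OF mono] by auto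
  moreover have "h * (\<Sum>k=1..Suc m. f (a + real k * h)) = h * (\<Sum>k=1..m. f (a + real k * h)) + h * f y"
    by (simp add: y_def algebra_simps)
  ultimately show ?case
    unfolding y_def[symmetric] right_diff_distrib using IH split by (intro conjI) linarith+
qed

lemma abs_right_riemann_sum_error_le:
  fixes f :: "real \<Rightarrow> real"
  assumes "0 \<le> h" "mono_on {a..a + real m * h} f \<or> antimono_on {a..a + real m * h} f"
    and "f integrable_on {a..a + real m * h}"
  shows "\<bar>h * (\<Sum>k=1..m. f (a + real k * h)) - integral {a..a + real m * h} f\<bar>
           \<le> h * \<bar>f (a + real m * h) - f a\<bar>"
proof -
  let ?S = "\<Sum>k=1..m. f (a + real k * h)" and ?I = "integral {a..a + real m * h} f"
    and ?d = "f (a + real m * h) - f a"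
  have "h * ?d \<le> h * \<bar>?d\<bar>" "h * (- ?d) \<le> h * \<bar>?d\<bar>"
    using assms(1) by (simp_all add: mult_left_mono)
  moreover have "0 \<le> h * ?S - ?I \<and> h * ?S - ?I \<le> h * ?d \<or> h * ?d \<le> h * ?S - ?I \<and> h * ?S - ?I \<le> 0"
    using assms(2)
  proof
    assume "mono_on {a..a + real m * h} f"
    then show ?thesis
      using right_riemann_sum_error_mono_on[of h a m f] assms(1,3) by simp
  next
    assume "antimono_on {a..a + real m * h} f"
    then have "mono_on {a..a + real m * h} (\<lambda>x. - f x)"
      by (auto simp: monotone_on_def)
    then show ?thesis
      using right_riemann_sum_error_mono_on[of h a m "\<lambda>x. - f x"] assms(1,3)
      by (simp add: sum_negf integrable_neg algebra_simps)
  qed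
  ultimately show ?thesis
    unfolding abs_le_iff by linarith
qed

lemma sum_Icc_diff_shift:
  fixes f :: "nat \<Rightarrow> 'a::ab_group_add"
  assumes "p \<le> q"
  shows "(\<Sum>k=1..q. f k) - (\<Sum>k=1..p. f k) = (\<Sum>k=1..q - p. f (p + k))"
proof -
  obtain d where "q = p + d"
    using assms le_Suc_ex by blast
  moreover have "(\<Sum>k=1..p + d. f k) - (\<Sum>k=1..p. f k) = (\<Sum>k=1..d. f (p + k))"
    by (induction d) (simp_all add: algebra_simps)
  ultimately show ?thesis
    by simp
qed

lemma sum_Icc_reflect:
  assumes "n < c"
  shows "(\<Sum>j=1..n. f (c - j)) = (\<Sum>j=1..n. f (c - Suc n + j))"
  using assms by (subst sum.atLeastAtMost_rev) (auto intro!: sum.cong)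

section \<open>Riemann sums of \<open>logsin\<close> with mesh \<open>1/(N + 1/2)\<close>\<close>

definition mesh :: "nat \<Rightarrow> real" where
  "mesh N = 1 / (real N + 1/2)"

definition grid_bound :: "nat \<Rightarrow> real" where
  "grid_bound N = ln 2 + 2 * ln (real N + 1/2)"

definition riemann_error :: "nat \<Rightarrow> nat \<Rightarrow> real" where
  "riemann_error N b = mesh N * (\<Sum>k=1..b. logsin (real k * mesh N)) - logsin_int (real b * mesh N)"

definition riemann_error_bound :: "nat \<Rightarrow> real" where
  "riemann_error_bound N = 7 * mesh N * grid_bound N + \<bar>logsin_int (mesh N)\<bar>"

lemma mesh_pos: "0 < mesh N"
  by (simp add: mesh_def)

lemma grid_le: "k \<le> N \<Longrightarrow> real k * mesh N \<le> 1 - mesh N / 2"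
proof -
  assume "k \<le> N"
  then have "real k * mesh N \<le> real N * mesh N"
    using mesh_pos[of N] by (intro mult_right_mono) auto
  also have "real N * mesh N = 1 - mesh N / 2"
    by (simp add: mesh_def field_simps)
  finally show ?thesis .
qed

lemma grid_less_1: "k \<le> N \<Longrightarrow> real k * mesh N < 1"
  using grid_le[of k N] mesh_pos[of N] by linarith

lemma grid_bound_nonneg: "1 \<le> N \<Longrightarrow> 0 \<le> grid_bound N"
  by (simp add: grid_bound_def)

lemma abs_logsin_grid_le:
  assumes "1 \<le> k" "k \<le> N"
  shows "\<bar>logsin (real k * mesh N)\<bar> \<le> grid_bound N"
proof -
  let ?h = "mesh N" and ?x = "real k * mesh N"
  have x: "?h \<le> ?x" "?x \<le> 1 - ?h / 2"
    using assms grid_le[of k N] mesh_pos[of N] by (auto simp: mult_le_cancel_right1)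
  have "ln ?x + ln (1 - ?x) \<le> logsin ?x"
    using x mesh_pos[of N] by (intro ln_plus_ln_one_minus_le_logsin) auto
  moreover have "ln ?h \<le> ln ?x" "ln (?h / 2) \<le> ln (1 - ?x)"
    using x mesh_pos[of N] by simp_all
  moreover have "ln (?h / 2) = ln ?h - ln 2"
    using mesh_pos[of N] by (simp add: ln_div)
  moreover have "ln ?h = - ln (real N + 1/2)"
    by (simp add: ln_div mesh_def)
  moreover have "0 \<le> ln (real N + 1/2)"
    using assms by simp
  ultimately show ?thesis
    using logsin_le_ln2[of ?x] unfolding grid_bound_def abs_le_iff by linarith
qed

lemma riemann_error_diff:
  assumes "p \<le> q" "q \<le> N"
  shows "riemann_error N q - riemann_error N p
    = mesh N * (\<Sum>k=1..q - p. logsin (real p * mesh N + real k * mesh N))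
      - integral {real p * mesh N..real p * mesh N + real (q - p) * mesh N} logsin"
proof -
  have q: "real p * mesh N + real (q - p) * mesh N = real q * mesh N"
    using assms by (simp add: of_nat_diff algebra_simps)
  have "logsin_int (real q * mesh N) - logsin_int (real p * mesh N)
      = integral {real p * mesh N..real q * mesh N} logsin"
    using assms grid_less_1[of q N] mesh_pos[of N]
    by (intro logsin_int_diff) (auto intro: mult_right_mono)
  moreover have "(\<Sum>k=1..q. logsin (real k * mesh N)) - (\<Sum>k=1..p. logsin (real k * mesh N))
      = (\<Sum>k=1..q - p. logsin (real p * mesh N + real k * mesh N))"
    using sum_Icc_diff_shift[OF assms(1), of "\<lambda>k. logsin (real k * mesh N)"]
    by (simp add: algebra_simps)
  ultimately show ?thesis
    unfolding q riemann_error_def by (simp add: algebra_simps)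
qed

lemma riemann_error_run:
  assumes "1 \<le> p" "p \<le> q" "q \<le> N" "real q * mesh N \<le> 1/2 \<or> 1/2 \<le> real p * mesh N"
  shows "\<bar>riemann_error N q - riemann_error N p\<bar> \<le> 2 * mesh N * grid_bound N"
proof -
  define a where "a = real p * mesh N"
  define b where "b = real q * mesh N"
  have b: "a + real (q - p) * mesh N = b"
    using assms by (simp add: a_def b_def of_nat_diff algebra_simps)
  have a0: "0 < a" and b1: "b < 1"
    using assms mesh_pos[of N] grid_less_1[of q N] by (simp_all add: a_def b_def)
  have "mono_on {a..b} logsin \<or> antimono_on {a..b} logsin"
    using assms(4) a0 b1
    by (auto simp: monotone_on_def a_def[symmetric] b_def[symmetric]
        intro: logsin_increasing logsin_decreasing)
  then have "\<bar>riemann_error N q - riemann_error N p\<bar> \<le> mesh N * \<bar>logsin b - logsin a\<bar>"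
    using abs_right_riemann_sum_error_le[of "mesh N" a "q - p" logsin] a0 b1 mesh_pos[of N]
    by (simp add: riemann_error_diff[OF assms(2,3)] b a_def[symmetric] logsin_integrable)
  also have "\<dots> \<le> mesh N * (2 * grid_bound N)"
    using abs_logsin_grid_le[of p N] abs_logsin_grid_le[of q N] assms mesh_pos[of N]
    by (intro mult_left_mono) (auto simp: a_def b_def)
  finally show ?thesis
    by simp
qed

lemma riemann_error_cell:
  assumes "1 \<le> c" "Suc c \<le> N"
  shows "\<bar>riemann_error N (Suc c) - riemann_error N c\<bar> \<le> 2 * mesh N * grid_bound N"
proof -
  define a where "a = real c * mesh N"
  define b where "b = real (Suc c) * mesh N"
  have ab: "a \<le> b" "b = a + mesh N" "0 < a" "b < 1"
    using assms mesh_pos[of N] grid_less_1[of "Suc c" N]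
    by (simp_all add: a_def b_def algebra_simps)
  have ga: "\<bar>logsin a\<bar> \<le> grid_bound N"
    unfolding a_def using assms by (intro abs_logsin_grid_le) auto
  have gb: "\<bar>logsin b\<bar> \<le> grid_bound N"
    unfolding b_def using assms by (intro abs_logsin_grid_le) auto
  have "- grid_bound N \<le> logsin x" if "x \<in> {a..b}" for x
    using that ab ga gb logsin_increasing[of a x] logsin_decreasing[of x b]
    by (cases "x \<le> 1/2") auto
  moreover have "logsin x \<le> grid_bound N" for x
  proof -
    have "0 \<le> ln (real N + 1/2)"
      using assms by simp
    then show ?thesis
      using logsin_le_ln2[of x] unfolding grid_bound_def by linarith
  qed
  ultimately have "\<bar>integral {a..b} logsin\<bar> \<le> mesh N * grid_bound N"
    using integral_between_consts[of a b logsin "- grid_bound N" "grid_bound N"] ab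
      logsin_integrable[of a b]
    by (simp add: abs_le_iff)
  moreover have "\<bar>mesh N * logsin b\<bar> \<le> mesh N * grid_bound N"
    using gb mesh_pos[of N] by (simp add: abs_mult mult_left_mono)
  moreover have "riemann_error N (Suc c) - riemann_error N c = mesh N * logsin b - integral {a..b} logsin"
    using riemann_error_diff[of c "Suc c" N] assms by (simp add: a_def b_def algebra_simps)
  ultimately show ?thesis
    by linarith
qed

text \<open>The grid splits at \<open>N div 2\<close> into two runs on which \<open>logsin\<close> is monotone and one
  cell containing \<open>1/2\<close>; with the first cell this accounts for the factor \<open>7 = 1 + 2 + 2 + 2\<close>
  in \<open>riemann_error_bound\<close>.\<close>

lemma abs_riemann_error_le:
  assumes "2 \<le> N" "b \<le> N"
  shows "\<bar>riemann_error N b\<bar> \<le> riemann_error_bound N"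
proof -
  define c where "c = N div 2"
  have c: "1 \<le> c" "Suc c \<le> N" "2 * real c \<le> real N" "real N \<le> 2 * real c + 1"
    using assms unfolding c_def by linarith+
  have c_half: "real c * mesh N \<le> 1/2" "1/2 \<le> real (Suc c) * mesh N"
    using c by (simp_all add: mesh_def field_simps)
  have hB: "0 \<le> mesh N * grid_bound N"
    using assms mesh_pos[of N] grid_bound_nonneg[of N] by simp
  have "\<bar>mesh N * logsin (mesh N)\<bar> \<le> mesh N * grid_bound N"
    using abs_logsin_grid_le[of 1 N] assms mesh_pos[of N] by (simp add: abs_mult mult_left_mono)
  then have first: "\<bar>riemann_error N 1\<bar> \<le> mesh N * grid_bound N + \<bar>logsin_int (mesh N)\<bar>"
    by (simp add: riemann_error_def)
  consider "b = 0" | "1 \<le> b" "b \<le> c" | "c < b"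
    by linarith
  then show ?thesis
  proof cases
    case 1
    then show ?thesis
      using hB by (simp add: riemann_error_def riemann_error_bound_def)
  next
    case 2
    then have "real b * mesh N \<le> real c * mesh N"
      using mesh_pos[of N] by (intro mult_right_mono) auto
    then have "real b * mesh N \<le> 1/2"
      using c_half by linarith
    then have "\<bar>riemann_error N b - riemann_error N 1\<bar> \<le> 2 * mesh N * grid_bound N"
      using 2 assms by (intro riemann_error_run) auto
    then show ?thesis
      using first hB unfolding riemann_error_bound_def abs_le_iff by linarith
  next
    case 3
    have "\<bar>riemann_error N c - riemann_error N 1\<bar> \<le> 2 * mesh N * grid_bound N"
      using c c_half by (intro riemann_error_run) auto
    moreover have "\<bar>riemann_error N (Suc c) - riemann_error N c\<bar> \<le> 2 * mesh N * grid_bound N"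
      using c by (intro riemann_error_cell)
    moreover have "\<bar>riemann_error N b - riemann_error N (Suc c)\<bar> \<le> 2 * mesh N * grid_bound N"
      using 3 assms c_half by (intro riemann_error_run) auto
    ultimately show ?thesis
      using first hB unfolding riemann_error_bound_def abs_le_iff by linarith
  qed
qed

lemma mesh_tendsto_0: "mesh \<longlonglongrightarrow> 0"
  unfolding mesh_def by real_asymp

lemma riemann_error_bound_tendsto_0: "riemann_error_bound \<longlonglongrightarrow> 0"
proof -
  have "(\<lambda>N. 7 * mesh N * grid_bound N) \<longlonglongrightarrow> 0"
    unfolding mesh_def grid_bound_def by real_asymp
  moreover have "eventually (\<lambda>N. mesh N \<in> {0..1}) sequentially"
    using eventually_ge_at_top[of "1::nat"]
  proof eventually_elim
    case (elim N)
    then show ?case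
      using mesh_pos[of N] by (simp add: mesh_def field_simps)
  qed
  then have "(\<lambda>N. logsin_int (mesh N)) \<longlonglongrightarrow> logsin_int 0"
    by (intro tendsto_logsin_int mesh_tendsto_0)
  ultimately show ?thesis
    unfolding riemann_error_bound_def[abs_def]
    by (intro tendsto_add_zero) (simp_all add: tendsto_rabs_zero)
qed

section \<open>The factor \<open>c_M\<close> at the root of unity\<close>

lemma norm_one_minus_cis: "norm (1 - cis x) = 2 * \<bar>sin (x / 2)\<bar>"
proof -
  have "norm (1 - cis x) = sqrt ((1 - cos x)\<^sup>2 + (sin x)\<^sup>2)"
    by (simp add: norm_complex_def)
  also have "(1 - cos x)\<^sup>2 + (sin x)\<^sup>2 = (2 * sin (x / 2))\<^sup>2"
    using sin_cos_squared_add[of x] cos_double_sin[of "x / 2"]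
    by (simp add: power2_eq_square algebra_simps)
  also have "sqrt ((2 * sin (x / 2))\<^sup>2) = 2 * \<bar>sin (x / 2)\<bar>"
    by (simp only: real_sqrt_abs abs_mult)
  finally show ?thesis .
qed

lemma qN_power: "qN N ^ k = cis (2 * pi * (real k * mesh N))"
proof -
  have "qN N = cis (2 * pi * mesh N)"
    by (simp add: qN_def cis_conv_exp mesh_def mult_ac)
  then have "qN N ^ k = cis (real k * (2 * pi * mesh N))"
    by (simp only: Complex.DeMoivre)
  then show ?thesis
    by (simp add: ac_simps)
qed

lemma ln_norm_one_minus_qN_power: "ln (norm (1 - qN N ^ k)) = logsin (real k * mesh N)"
  by (simp add: qN_power norm_one_minus_cis logsin_def abs_mult)

lemma norm_one_minus_qN_power_pos: "1 \<le> k \<Longrightarrow> k \<le> N \<Longrightarrow> 0 < norm (1 - qN N ^ k)"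
  using sin_pi_pos[of "real k * mesh N"] grid_less_1[of k N] mesh_pos[of N]
  by (simp add: qN_power norm_one_minus_cis)

lemma ln_cM_eq:
  assumes "admissible M n l" "M \<le> N"
  shows "ln (cM M n l (qN N)) = (\<Sum>j=1..n. logsin (real (M - l - j) * mesh N)
           + logsin (real (l + j) * mesh N) - logsin (real j * mesh N))"
proof -
  let ?f = "\<lambda>k. norm (1 - qN N ^ k)"
  have pos: "0 < ?f (M - l - j)" "0 < ?f (l + j)" "0 < ?f j" if "j \<in> {1..n}" for j
    using that assms by (auto simp: admissible_def intro!: norm_one_minus_qN_power_pos
        simp del: zero_less_norm_iff)
  have "ln (cM M n l (qN N)) = ln (\<Prod>j=1..n. ?f (M - l - j) * ?f (l + j) / ?f j)"
    by (simp add: cM_def norm_mult norm_divide)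
  also have "\<dots> = (\<Sum>j=1..n. ln (?f (M - l - j) * ?f (l + j) / ?f j))"
  proof (rule ln_prod)
    fix j assume "j \<in> {1..n}"
    then have "0 < ?f (M - l - j) * ?f (l + j) / ?f j"
      using pos by (intro divide_pos_pos mult_pos_pos)
    then show "?f (M - l - j) * ?f (l + j) / ?f j \<noteq> 0"
      by linarith
  qed simp
  also have "\<dots> = (\<Sum>j=1..n. ln (?f (M - l - j)) + ln (?f (l + j)) - ln (?f j))"
  proof (rule sum.cong[OF refl])
    fix j assume "j \<in> {1..n}"
    then show "ln (?f (M - l - j) * ?f (l + j) / ?f j) = ln (?f (M - l - j)) + ln (?f (l + j)) - ln (?f j)"
      using pos[of j] by (simp add: ln_mult ln_div)
  qed
  finally show ?thesis
    by (simp only: ln_norm_one_minus_qN_power)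
qed

lemma mesh_ln_cM_eq:
  assumes "admissible M n l" "M \<le> N"
  shows "mesh N * ln (cM M n l (qN N))
    = limit_functional (real (M - l - 1 - n) * mesh N) (real n * mesh N) (real l * mesh N)
      + (riemann_error N (M - l - 1) - riemann_error N (M - l - 1 - n))
      + (riemann_error N (l + n) - riemann_error N l) - riemann_error N n"
proof -
  define g where "g k = logsin (real k * mesh N)" for k
  define P where "P b = (\<Sum>k=1..b. g k)" for b
  define a where "a = M - l - 1 - n"
  have range: "1 \<le> n" "1 \<le> l" "l + n + 1 \<le> M"
    using assms(1) by (auto simp: admissible_def)
  then have a: "M - l - 1 = a + n" "M - l - Suc n = a"
    by (simp_all add: a_def)
  have "(\<Sum>j=1..n. g (M - l - j)) = (\<Sum>j=1..n. g (M - l - Suc n + j))"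
    using range by (intro sum_Icc_reflect) auto
  also have "\<dots> = (\<Sum>j=1..n. g (a + j))"
    by (simp only: a)
  also have "\<dots> = P (a + n) - P a"
    using sum_Icc_diff_shift[of a "a + n" g] by (simp add: P_def)
  finally have reflected: "(\<Sum>j=1..n. g (M - l - j)) = P (a + n) - P a" .
  have shifted: "(\<Sum>j=1..n. g (l + j)) = P (l + n) - P l"
    using sum_Icc_diff_shift[of l "l + n" g] by (simp add: P_def)
  have "ln (cM M n l (qN N)) = (P (a + n) - P a) + (P (l + n) - P l) - P n"
    using ln_cM_eq[OF assms] reflected shifted
    by (simp add: g_def P_def sum.distrib sum_subtractf)
  then have "mesh N * ln (cM M n l (qN N))
      = (mesh N * P (a + n) - mesh N * P a) + (mesh N * P (l + n) - mesh N * P l) - mesh N * P n"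
    by (simp only: right_diff_distrib distrib_left)
  moreover have "mesh N * P b = riemann_error N b + logsin_int (real b * mesh N)" for b
    by (simp add: riemann_error_def P_def g_def)
  ultimately show ?thesis
    unfolding a a_def[symmetric]
    by (simp add: limit_functional_def logsin_window_def algebra_simps)
qed

lemma tendsto_limit_functional:
  assumes "u \<longlonglongrightarrow> u0" "n \<longlonglongrightarrow> n0" "l \<longlonglongrightarrow> l0"
    and "eventually (\<lambda>N. 0 \<le> u N \<and> 0 \<le> n N \<and> 0 \<le> l N \<and> u N + n N + l N \<le> 1) sequentially"
  shows "(\<lambda>N. limit_functional (u N) (n N) (l N)) \<longlonglongrightarrow> limit_functional u0 n0 l0"
proof -
  have "eventually (\<lambda>N. x N \<in> {0..1}) sequentially"
    if "x \<in> {u, n, l, \<lambda>N. u N + n N, \<lambda>N. l N + n N}" for x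
    using assms(4) by (rule eventually_mono) (use that in auto)
  then show ?thesis
    unfolding limit_functional_def logsin_window_def
    by (intro tendsto_intros tendsto_logsin_int assms(1-3)) auto
qed

lemma abs_scaled_ln_cM_minus_limit_functional_le:
  assumes "admissible M n l" "M \<le> N" "2 \<le> N"
  shows "\<bar>ln (cM M n l (qN N)) / (real N + 1/2)
           - limit_functional (real (M - l - 1 - n) * mesh N) (real n * mesh N) (real l * mesh N)\<bar>
         \<le> 5 * riemann_error_bound N"
proof -
  have bound: "\<bar>riemann_error N b\<bar> \<le> riemann_error_bound N" if "b \<le> M" for b
    using that assms by (intro abs_riemann_error_le) auto
  have "\<bar>riemann_error N (M - l - 1)\<bar> \<le> riemann_error_bound N"
    "\<bar>riemann_error N (M - l - 1 - n)\<bar> \<le> riemann_error_bound N"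
    "\<bar>riemann_error N (l + n)\<bar> \<le> riemann_error_bound N"
    "\<bar>riemann_error N l\<bar> \<le> riemann_error_bound N" "\<bar>riemann_error N n\<bar> \<le> riemann_error_bound N"
    using assms(1) by (auto simp: admissible_def intro!: bound)
  moreover have "ln (cM M n l (qN N)) / (real N + 1/2) = mesh N * ln (cM M n l (qN N))"
    by (simp add: mesh_def)
  ultimately show ?thesis
    unfolding mesh_ln_cM_eq[OF assms(1,2)] abs_le_iff by linarith
qed

lemma tendsto_scaled_ln_cM:
  fixes M n l :: "nat \<Rightarrow> nat"
  assumes grid: "eventually (\<lambda>N. M N \<le> N \<and> admissible (M N) (n N) (l N)) sequentially"
    and "(\<lambda>N. real (M N) / (real N + 1/2)) \<longlonglongrightarrow> s"
    and "(\<lambda>N. real (n N) / (real N + 1/2)) \<longlonglongrightarrow> ns"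
    and "(\<lambda>N. real (l N) / (real N + 1/2)) \<longlonglongrightarrow> ls"
  shows "(\<lambda>N. ln (cM (M N) (n N) (l N) (qN N)) / (real N + 1/2))
           \<longlonglongrightarrow> limit_functional (s - ls - ns) ns ls"
    and "0 \<le> s - ls - ns" "0 \<le> ns" "0 \<le> ls"
proof -
  define u where "u N = real (M N - l N - 1 - n N) * mesh N" for N
  have M_lim: "(\<lambda>N. real (M N) * mesh N) \<longlonglongrightarrow> s"
    and n_lim: "(\<lambda>N. real (n N) * mesh N) \<longlonglongrightarrow> ns"
    and l_lim: "(\<lambda>N. real (l N) * mesh N) \<longlonglongrightarrow> ls"
    using assms(2-4) by (simp_all add: mesh_def)
  have "(\<lambda>N. real (M N) * mesh N - real (l N) * mesh N - mesh N - real (n N) * mesh N)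
      \<longlonglongrightarrow> s - ls - 0 - ns"
    by (intro tendsto_intros M_lim l_lim n_lim mesh_tendsto_0)
  moreover have "eventually (\<lambda>N. real (M N) * mesh N - real (l N) * mesh N - mesh N
      - real (n N) * mesh N = u N) sequentially"
    using grid by eventually_elim (auto simp: admissible_def u_def of_nat_diff algebra_simps)
  ultimately have u_lim: "u \<longlonglongrightarrow> s - ls - ns"
    by (simp add: tendsto_cong)
  have simplex: "eventually (\<lambda>N. 0 \<le> u N \<and> 0 \<le> real (n N) * mesh N \<and> 0 \<le> real (l N) * mesh N
      \<and> u N + real (n N) * mesh N + real (l N) * mesh N \<le> 1) sequentially"
    using grid
  proof eventually_elim
    case (elim N)
    then have "u N + real (n N) * mesh N + real (l N) * mesh N = real (M N - 1) * mesh N"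
      by (auto simp: admissible_def u_def of_nat_diff algebra_simps)
    moreover have "real (M N - 1) * mesh N < 1"
      using elim by (intro grid_less_1) auto
    ultimately show ?case
      using mesh_pos[of N] by (simp add: u_def)
  qed
  have "eventually (\<lambda>N. norm (ln (cM (M N) (n N) (l N) (qN N)) / (real N + 1/2)
      - limit_functional (u N) (real (n N) * mesh N) (real (l N) * mesh N))
      \<le> 5 * riemann_error_bound N) sequentially"
    using grid eventually_ge_at_top[of "2::nat"] unfolding u_def real_norm_def
    by eventually_elim (blast intro: abs_scaled_ln_cM_minus_limit_functional_le)
  moreover have "(\<lambda>N. 5 * riemann_error_bound N) \<longlonglongrightarrow> 0"
    by (intro tendsto_mult_right_zero riemann_error_bound_tendsto_0)
  ultimately have "(\<lambda>N. ln (cM (M N) (n N) (l N) (qN N)) / (real N + 1/2)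
      - limit_functional (u N) (real (n N) * mesh N) (real (l N) * mesh N)) \<longlonglongrightarrow> 0"
    by (rule Lim_null_comparison)
  from tendsto_add[OF this tendsto_limit_functional[OF u_lim n_lim l_lim simplex]]
  show "(\<lambda>N. ln (cM (M N) (n N) (l N) (qN N)) / (real N + 1/2))
      \<longlonglongrightarrow> limit_functional (s - ls - ns) ns ls"
    by simp
  show "0 \<le> s - ls - ns"
    using simplex by (intro tendsto_lowerbound[OF u_lim]) (auto elim: eventually_mono)
  show "0 \<le> ns"
    using simplex by (intro tendsto_lowerbound[OF n_lim]) (auto elim: eventually_mono)
  show "0 \<le> ls"
    using simplex by (intro tendsto_lowerbound[OF l_lim]) (auto elim: eventually_mono)
qed

theorem lemma4p1:
  fixes M n l :: "nat \<Rightarrow> nat" and s ns ls :: real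
  assumes "eventually (\<lambda>N. 1 \<le> M N \<and> M N \<le> N) sequentially"
    and "eventually (\<lambda>N. admissible (M N) (n N) (l N) \<and>
           (\<forall>a b. admissible (M N) a b \<longrightarrow>
              cM (M N) a b (qN N) \<le> cM (M N) (n N) (l N) (qN N))) sequentially"
    and "s \<in> {0..1}"
    and "(\<lambda>N. real (M N) / (real N + 1/2)) \<longlonglongrightarrow> s"
    and "(\<lambda>N. real (n N) / (real N + 1/2)) \<longlonglongrightarrow> ns"
    and "(\<lambda>N. real (l N) / (real N + 1/2)) \<longlonglongrightarrow> ls"
  shows "\<exists>L. (\<lambda>N. ln (cM (M N) (n N) (l N) (qN N)) / (real N + 1/2)) \<longlonglongrightarrow> L
           \<and> L \<le> vol_WL / (2 * pi)
           \<and> (L = vol_WL / (2 * pi) \<longleftrightarrow> s = 1 \<and> ns = 1/2 \<and> ls = 1/4)"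
proof -
  have "eventually (\<lambda>N. M N \<le> N \<and> admissible (M N) (n N) (l N)) sequentially"
    using assms(1,2) by eventually_elim auto
  note limit = tendsto_scaled_ln_cM[OF this assms(4-6)]
  have simplex: "0 \<le> s - ls - ns" "0 \<le> ns" "0 \<le> ls" "(s - ls - ns) + ns + ls \<le> 1"
    using limit(2-4) assms(3) by auto
  show ?thesis
    using limit(1) limit_functional_le_vol[OF simplex] limit_functional_eq_vol_iff[OF simplex]
    by (intro exI[of _ "limit_functional (s - ls - ns) ns ls"]) auto
qed

end
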